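(* Let $\Gamma$ be a discrete subgroup of $E(n)$, and suppose that $(G,V)$ and $(G',V')$ are finite index cocompact translation pairs of $\Gamma$. Then $V'=V+a$ for some $a\in\mathbb{R}^n$; in particular $\dim V=\dim V'$.
   Context: $E(n)$ denotes the group of isometries of $\mathbb{R}^n$, each of the form $x\mapsto Ax+a$ with $A\in O(n)$, with the topology of $O(n)\times\mathbb{R}^n$; discreteness refers to this topology. For a discrete $\Gamma\le E(n)$, a subgroup $G\le\Gamma$ and an affine subspace $V\subset\mathbb{R}^n$, the pair $(G,V)$ is a cocompact translation pair of $\Gamma$ if $gV=V$ for all $g\in G$, each restriction $g|_V$ is a translation of $V$, and the quotient $V/G$ is compact; it is a finite index cocompact translation pair if moreover $[\Gamma:G]<\infty$. *)

theory Defs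
  imports "HOL-Analysis.Analysis"
begin

text \<open>The topology is that of the product
  (real^'n^'n) \<times> real^'n, restricted to O(n) \<times> R^n.\<close>

type_synonym 'n isom = "(real^'n^'n) \<times> (real^'n)"

definition Eucl :: "'n::finite isom set" where
  "Eucl = {(A, a). orthogonal_matrix A}"

definition iso_app :: "'n::finite isom \<Rightarrow> real^'n \<Rightarrow> real^'n" where
  "iso_app g x = fst g *v x + snd g"

definition iso_comp :: "'n::finite isom \<Rightarrow> 'n isom \<Rightarrow> 'n isom" where
  "iso_comp g h = (fst g ** fst h, fst g *v snd h + snd g)"

definition iso_id :: "'n::finite isom" where
  "iso_id = (mat 1, 0)"

definition iso_inv :: "'n::finite isom \<Rightarrow> 'n isom" where
  "iso_inv g = (transpose (fst g), - (transpose (fst g) *v snd g))"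

definition subgroup_E :: "'n::finite isom set \<Rightarrow> bool" where
  "subgroup_E G \<longleftrightarrow> G \<subseteq> Eucl \<and> iso_id \<in> G \<and>
     (\<forall>g\<in>G. \<forall>h\<in>G. iso_comp g h \<in> G) \<and> (\<forall>g\<in>G. iso_inv g \<in> G)"

definition discrete_subgroup_E :: "'n::finite isom set \<Rightarrow> bool" where
  "discrete_subgroup_E \<Gamma> \<longleftrightarrow> subgroup_E \<Gamma> \<and> discrete \<Gamma>"

definition finite_index :: "'n::finite isom set \<Rightarrow> 'n isom set \<Rightarrow> bool" where
  "finite_index \<Gamma> G \<longleftrightarrow> finite ((\<lambda>g. iso_comp g ` G) ` \<Gamma>)"

definition affine_subspace :: "(real^'n::finite) set \<Rightarrow> bool" where
  "affine_subspace V \<longleftrightarrow> affine V \<and> V \<noteq> {}"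

definition compact_orbit_space :: "'n::finite isom set \<Rightarrow> (real^'n) set \<Rightarrow> bool" where
  "compact_orbit_space G V \<longleftrightarrow>
     (\<exists>(Y :: (real^'n) set topology) q.
        quotient_map (top_of_set V) Y q \<and>
        (\<forall>x\<in>V. \<forall>y\<in>V. q x = q y \<longleftrightarrow> (\<exists>g\<in>G. iso_app g x = y)) \<and>
        compact_space Y)"

definition cocompact_translation_pair ::
    "'n::finite isom set \<Rightarrow> 'n isom set \<Rightarrow> (real^'n) set \<Rightarrow> bool" where
  "cocompact_translation_pair \<Gamma> G V \<longleftrightarrow>
     subgroup_E G \<and> G \<subseteq> \<Gamma> \<and> affine_subspace V \<and>
     (\<forall>g\<in>G. iso_app g ` V = V) \<and>
     (\<forall>g\<in>G. \<exists>t. \<forall>x\<in>V. iso_app g x = x + t) \<and>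
     compact_orbit_space G V"

definition fi_cocompact_translation_pair ::
    "'n::finite isom set \<Rightarrow> 'n isom set \<Rightarrow> (real^'n) set \<Rightarrow> bool" where
  "fi_cocompact_translation_pair \<Gamma> G V \<longleftrightarrow>
     cocompact_translation_pair \<Gamma> G V \<and> finite_index \<Gamma> G"

end

theory Submission
  imports Defs
begin

text \<open>Cocompactness of G on V bounds the distance from any point of V to a fixed point,
  after moving by some element of G. Writing such an element as c h with c from a
  finite set of coset representatives of G' in \<Gamma> and h \<in> G', and using that G' acts on V'
  by isometries, every point of V lies within a uniform distance of V'; symmetrically
  for V' and V. Two nonempty affine sets each within bounded distance of the other have
  the same direction, so they are translates.\<close>

lemma iso_app_iso_comp: "iso_app (iso_comp g h) x = iso_app g (iso_app h x)"
  by (simp add: iso_app_def iso_comp_def matrix_vector_right_distrib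
      matrix_vector_mul_assoc add.assoc)

lemma iso_comp_iso_id: "iso_comp g iso_id = g"
  by (simp add: iso_comp_def iso_id_def)

lemma continuous_on_iso_app: "continuous_on S (iso_app g)"
  unfolding iso_app_def by (intro continuous_intros)

lemma dist_iso_app:
  assumes "g \<in> Eucl"
  shows "dist (iso_app g x) (iso_app g y) = dist x y"
proof -
  obtain A b where g: "g = (A, b)" "orthogonal_matrix A"
    using assms by (auto simp: Eucl_def)
  have "orthogonal_transformation (\<lambda>x. A *v x)"
    using g(2) by (simp add: orthogonal_transformation_matrix)
  moreover have "iso_app g x - iso_app g y = A *v (x - y)"
    by (simp add: g iso_app_def matrix_vector_mult_diff_distrib)
  ultimately show ?thesis
    by (simp add: dist_norm orthogonal_transformation_norm)
qed

lemma iso_app_iso_inv_left: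
  assumes "g \<in> Eucl"
  shows "iso_app (iso_inv g) (iso_app g x) = x"
proof -
  obtain A b where g: "g = (A, b)" "orthogonal_matrix A"
    using assms by (auto simp: Eucl_def)
  have "transpose A ** A = mat 1"
    using g(2) by (simp add: orthogonal_matrix_def)
  then show ?thesis
    by (simp add: g iso_app_def iso_inv_def matrix_vector_right_distrib
        matrix_vector_mul_assoc)
qed

lemma iso_app_iso_inv_right:
  assumes "g \<in> Eucl"
  shows "iso_app g (iso_app (iso_inv g) x) = x"
proof -
  obtain A b where g: "g = (A, b)" "orthogonal_matrix A"
    using assms by (auto simp: Eucl_def)
  have "A ** transpose A = mat 1"
    using g(2) by (simp add: orthogonal_matrix_def)
  then have "A *v (transpose A *v z) = z" for z
    by (metis matrix_vector_mul_assoc matrix_vector_mul_lid)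
  then show ?thesis
    by (simp add: g iso_app_def iso_inv_def matrix_vector_mult_diff_distrib)
qed

lemma compact_space_incseq_open_cover:
  fixes U :: "nat \<Rightarrow> 'a set"
  assumes "compact_space Y" and "\<And>n. openin Y (U n)" and "incseq U"
    and "topspace Y \<subseteq> (\<Union>n. U n)"
  obtains N where "topspace Y \<subseteq> U N"
proof -
  obtain F where F: "finite F" "F \<subseteq> range U" "topspace Y \<subseteq> \<Union>F"
    using assms(1,2,4) unfolding compact_space_def compactin_def by (metis rangeE)
  obtain I where I: "finite I" "F = U ` I"
    using F(1,2) finite_subset_image by metis
  obtain N where N: "I \<subseteq> {..<N}"
    using finite_nat_bounded[OF I(1)] by blast
  have "U i \<subseteq> U N" if "i \<in> I" for i
  proof (rule monoD[OF assms(3)])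
    show "i \<le> N"
      using that N by auto
  qed
  then have "\<Union>F \<subseteq> U N"
    using I(2) by auto
  with F(3) show ?thesis
    by (meson order_trans that)
qed

lemma openin_orbit_quotient_image:
  assumes q: "quotient_map (top_of_set V) Y q"
    and fibres: "\<forall>x\<in>V. \<forall>y\<in>V. q x = q y \<longleftrightarrow> (\<exists>g\<in>G. iso_app g x = y)"
    and invariant: "\<forall>g\<in>G. iso_app g ` V \<subseteq> V"
    and "open S"
  shows "openin Y (q ` (V \<inter> S))"
proof -
  have saturation: "{x \<in> V. q x \<in> q ` (V \<inter> S)} = V \<inter> (\<Union>g\<in>G. iso_app g -` S)"
  proof (intro set_eqI iffI)
    fix x assume "x \<in> {x \<in> V. q x \<in> q ` (V \<inter> S)}"
    then obtain y where "x \<in> V" "y \<in> V \<inter> S" "q x = q y"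
      by auto
    then show "x \<in> V \<inter> (\<Union>g\<in>G. iso_app g -` S)"
      using fibres by blast
  next
    fix x assume "x \<in> V \<inter> (\<Union>g\<in>G. iso_app g -` S)"
    then obtain g where x: "x \<in> V" and g: "g \<in> G" "iso_app g x \<in> S"
      by auto
    then have gx: "iso_app g x \<in> V"
      using invariant by blast
    then have "q x = q (iso_app g x)"
      using fibres x g(1) by blast
    then show "x \<in> {x \<in> V. q x \<in> q ` (V \<inter> S)}"
      using x gx g(2) by blast
  qed
  have "open (iso_app g -` S)" for g
    using \<open>open S\<close> continuous_on_iso_app by (rule open_vimage)
  then have "openin (top_of_set V) {x \<in> V. q x \<in> q ` (V \<inter> S)}"
    unfolding saturation by (intro openin_open_Int open_UN) auto
  moreover have "q ` (V \<inter> S) \<subseteq> topspace Y"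
    using quotient_imp_surjective_map[OF q] by auto
  ultimately show ?thesis
    using q unfolding quotient_map_def topspace_euclidean_subtopology by blast
qed

lemma compact_orbit_space_bounded_fundamental_region:
  fixes V :: "(real^'n::finite) set"
  assumes "compact_orbit_space G V" and "\<forall>g\<in>G. iso_app g ` V \<subseteq> V"
  obtains R where "\<forall>x\<in>V. \<exists>g\<in>G. dist (iso_app g x) x0 \<le> R"
proof -
  obtain Y :: "(real^'n) set topology" and q where
    q: "quotient_map (top_of_set V) Y q" and
    fibres: "\<forall>x\<in>V. \<forall>y\<in>V. q x = q y \<longleftrightarrow> (\<exists>g\<in>G. iso_app g x = y)" and
    Y: "compact_space Y"
    using assms(1) unfolding compact_orbit_space_def by blast
  have onto: "q ` V = topspace Y"
    using quotient_imp_surjective_map[OF q] by simp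
  define U where "U n = q ` (V \<inter> ball x0 (real n))" for n :: nat
  have "openin Y (U n)" for n
    unfolding U_def by (rule openin_orbit_quotient_image[OF q fibres assms(2) open_ball])
  moreover have "incseq U"
    unfolding U_def by (intro monoI image_mono Int_mono order_refl subset_ball) simp
  moreover have "topspace Y \<subseteq> (\<Union>n. U n)"
  proof
    fix z assume "z \<in> topspace Y"
    then obtain x where "x \<in> V" "z = q x"
      using onto by auto
    moreover obtain n :: nat where "dist x0 x < real n"
      using reals_Archimedean2 by blast
    ultimately have "z \<in> U n"
      unfolding U_def by auto
    then show "z \<in> (\<Union>n. U n)"
      by blast
  qed
  ultimately obtain N where N: "topspace Y \<subseteq> U N"
    by (rule compact_space_incseq_open_cover[OF Y])
  have "\<exists>g\<in>G. dist (iso_app g x) x0 \<le> real N" if x: "x \<in> V" for x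
  proof -
    have "q x \<in> U N"
      using N onto x by blast
    then obtain y where y: "y \<in> V" "dist x0 y < real N" "q x = q y"
      unfolding U_def by auto
    then obtain g where "g \<in> G" "iso_app g x = y"
      using fibres x by blast
    with y(2) show ?thesis
      by (metis dist_commute less_imp_le)
  qed
  then show ?thesis
    using that by blast
qed

lemma finite_index_coset_representatives:
  assumes "finite_index \<Gamma> G" and "iso_id \<in> G"
  obtains F where "finite F" "F \<subseteq> \<Gamma>" "\<forall>g\<in>\<Gamma>. \<exists>c\<in>F. \<exists>h\<in>G. g = iso_comp c h"
proof -
  obtain F where F: "F \<subseteq> \<Gamma>" "finite F"
      "(\<lambda>g. iso_comp g ` G) ` \<Gamma> = (\<lambda>g. iso_comp g ` G) ` F"
    using finite_subset_image[OF assms(1)[unfolded finite_index_def] order_refl] by blast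
  have "\<exists>c\<in>F. \<exists>h\<in>G. g = iso_comp c h" if "g \<in> \<Gamma>" for g
  proof -
    have "iso_comp g ` G \<in> (\<lambda>g. iso_comp g ` G) ` \<Gamma>"
      using that by (rule imageI)
    then obtain c where c: "c \<in> F" "iso_comp g ` G = iso_comp c ` G"
      unfolding F(3) by (rule imageE)
    have "g \<in> iso_comp g ` G"
      using imageI[OF assms(2), of "iso_comp g"] by (simp only: iso_comp_iso_id)
    then obtain h where "h \<in> G" "g = iso_comp c h"
      unfolding c(2) by (rule imageE)
    with c(1) show ?thesis
      by blast
  qed
  then show ?thesis
    using that[OF F(2,1)] by blast
qed

lemma bounded_distance_to_invariant_set:
  assumes cocompact: "compact_orbit_space G V" and "G \<subseteq> \<Gamma>" and "\<Gamma> \<subseteq> Eucl"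
    and G_invariant: "\<forall>g\<in>G. iso_app g ` V \<subseteq> V"
    and "subgroup_E G'" and "finite_index \<Gamma> G'"
    and G'_invariant: "\<forall>h\<in>G'. iso_app h ` V' \<subseteq> V'" and "y0 \<in> V'"
  obtains B where "\<forall>x\<in>V. \<exists>y\<in>V'. dist x y \<le> B"
proof -
  have G': "G' \<subseteq> Eucl" "iso_id \<in> G'" "\<forall>h\<in>G'. iso_inv h \<in> G'"
    using \<open>subgroup_E G'\<close> unfolding subgroup_E_def by blast+
  obtain R where R: "\<forall>x\<in>V. \<exists>g\<in>G. dist (iso_app g x) y0 \<le> R"
    using compact_orbit_space_bounded_fundamental_region[OF cocompact G_invariant] by blast
  obtain F where F: "finite F" "F \<subseteq> \<Gamma>" "\<forall>g\<in>\<Gamma>. \<exists>c\<in>F. \<exists>h\<in>G'. g = iso_comp c h"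
    using finite_index_coset_representatives[OF \<open>finite_index \<Gamma> G'\<close> G'(2)] by blast
  \<comment> \<open>For g = c h, the isometry h carries g\<inverse> y0 to c\<inverse> y0 and a point of V' to y0.\<close>
  define M where "M = (\<Sum>c\<in>F. dist (iso_app (iso_inv c) y0) y0)"
  have "\<exists>y\<in>V'. dist x y \<le> R + M" if "x \<in> V" for x
  proof -
    obtain g where g: "g \<in> G" "dist (iso_app g x) y0 \<le> R"
      using R \<open>x \<in> V\<close> by blast
    then obtain c h where c: "c \<in> F" and h: "h \<in> G'" and gch: "g = iso_comp c h"
      using F(3) \<open>G \<subseteq> \<Gamma>\<close> by blast
    have Eucl: "g \<in> Eucl" "c \<in> Eucl" "h \<in> Eucl"
      using g(1) c h F(2) G'(1) \<open>G \<subseteq> \<Gamma>\<close> \<open>\<Gamma> \<subseteq> Eucl\<close> by blast+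
    define p where "p = iso_app (iso_inv g) y0"
    have "dist p x \<le> R"
      using g(2) dist_iso_app[OF Eucl(1), of p x]
      by (simp add: p_def iso_app_iso_inv_right[OF Eucl(1)] dist_commute)
    define y where "y = iso_app (iso_inv h) y0"
    have "y \<in> V'"
      unfolding y_def using G'_invariant G'(3) h \<open>y0 \<in> V'\<close> by blast
    have "iso_app h p = iso_app (iso_inv c) y0"
      using iso_app_iso_inv_left[OF Eucl(2)] iso_app_iso_inv_right[OF Eucl(1)]
      by (metis p_def gch iso_app_iso_comp)
    then have "dist p y = dist (iso_app (iso_inv c) y0) y0"
      using dist_iso_app[OF Eucl(3), of p y]
      by (simp add: y_def iso_app_iso_inv_right[OF Eucl(3)])
    also have "\<dots> \<le> M"
      unfolding M_def using F(1) c by (intro member_le_sum) auto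
    finally have "dist x y \<le> R + M"
      using \<open>dist p x \<le> R\<close> dist_triangle[of x y p] by (simp add: dist_commute)
    then show ?thesis
      using \<open>y \<in> V'\<close> by blast
  qed
  then show ?thesis
    using that by blast
qed

text \<open>Moving far out along v in V and coming back to V' along the scaled chord shows that
  y0 + v is a limit of points of V'.\<close>
lemma affine_translate_mem_of_bounded_distance:
  fixes V V' :: "'a::euclidean_space set"
  assumes "affine V" and "affine V'" and "x0 \<in> V" and "y0 \<in> V'"
    and B: "\<forall>x\<in>V. \<exists>y\<in>V'. dist x y \<le> B" and "x0 + v \<in> V"
  shows "y0 + v \<in> V'"
proof -
  have "B \<ge> 0"
    using B \<open>x0 \<in> V\<close> by (meson order_trans zero_le_dist)
  have "\<exists>y\<in>V'. dist y (y0 + v) < e" if "e > 0" for e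
  proof -
    define s where "s = (B + dist x0 y0 + 1) / e"
    have "s > 0"
      unfolding s_def using \<open>e > 0\<close> \<open>B \<ge> 0\<close> by (simp add: add_nonneg_pos)
    have "(1 - s) *\<^sub>R x0 + s *\<^sub>R (x0 + v) \<in> V"
      using \<open>affine V\<close> \<open>x0 \<in> V\<close> \<open>x0 + v \<in> V\<close> unfolding affine_def by simp
    then have "x0 + s *\<^sub>R v \<in> V"
      by (simp add: algebra_simps)
    then obtain y where y: "y \<in> V'" "dist (x0 + s *\<^sub>R v) y \<le> B"
      using B by blast
    define z where "z = (1 - 1/s) *\<^sub>R y0 + (1/s) *\<^sub>R y"
    have "z \<in> V'"
      unfolding z_def using \<open>affine V'\<close> \<open>y0 \<in> V'\<close> y(1) unfolding affine_def by simp
    have "z - (y0 + v) = (1/s) *\<^sub>R ((y - (x0 + s *\<^sub>R v)) + (x0 - y0))"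
      unfolding z_def using \<open>s > 0\<close> by (simp add: algebra_simps)
    then have "dist z (y0 + v) = (1/s) * norm ((y - (x0 + s *\<^sub>R v)) + (x0 - y0))"
      using \<open>s > 0\<close> by (simp add: dist_norm)
    also have "\<dots> \<le> (1/s) * (B + dist x0 y0)"
      using \<open>s > 0\<close> y(2) norm_triangle_ineq[of "y - (x0 + s *\<^sub>R v)" "x0 - y0"]
      by (intro mult_left_mono) (auto simp: dist_norm norm_minus_commute)
    also have "\<dots> < e"
      using \<open>s > 0\<close> \<open>e > 0\<close> \<open>B \<ge> 0\<close> by (simp add: s_def field_simps)
    finally show ?thesis
      using \<open>z \<in> V'\<close> by blast
  qed
  then show ?thesis
    using closed_approachable[OF affine_closed[OF \<open>affine V'\<close>]] by blast
qed

lemma affine_translation_of_mutually_bounded_distance: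
  fixes V V' :: "'a::euclidean_space set"
  assumes "affine V" and "affine V'" and "x0 \<in> V" and "y0 \<in> V'"
    and "\<forall>x\<in>V. \<exists>y\<in>V'. dist x y \<le> B" and "\<forall>y\<in>V'. \<exists>x\<in>V. dist y x \<le> B'"
  shows "V' = (\<lambda>x. x + (y0 - x0)) ` V"
proof (intro set_eqI iffI)
  fix y assume "y \<in> V'"
  then have "x0 + (y - y0) \<in> V"
    using affine_translate_mem_of_bounded_distance[OF assms(2,1,4,3,6), of "y - y0"] by simp
  then show "y \<in> (\<lambda>x. x + (y0 - x0)) ` V"
    by (rule rev_image_eqI) simp
next
  fix y assume "y \<in> (\<lambda>x. x + (y0 - x0)) ` V"
  then obtain x where "x \<in> V" "y = y0 + (x - x0)"
    by auto
  then show "y \<in> V'"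
    using affine_translate_mem_of_bounded_distance[OF assms(1-5), of "x - x0"] by simp
qed

lemma fi_cocompact_translation_pairD:
  assumes "fi_cocompact_translation_pair \<Gamma> G V"
  shows "subgroup_E G" "G \<subseteq> \<Gamma>" "affine V" "V \<noteq> {}" "\<forall>g\<in>G. iso_app g ` V \<subseteq> V"
    "compact_orbit_space G V" "finite_index \<Gamma> G"
  using assms unfolding fi_cocompact_translation_pair_def cocompact_translation_pair_def
    affine_subspace_def by auto

theorem mainTheorem7:
  fixes \<Gamma> G G' :: "'n::finite isom set" and V V' :: "(real^'n) set"
  assumes "discrete_subgroup_E \<Gamma>"
    and "fi_cocompact_translation_pair \<Gamma> G V"
    and "fi_cocompact_translation_pair \<Gamma> G' V'"
  shows "(\<exists>a. V' = (\<lambda>x. x + a) ` V) \<and> aff_dim V = aff_dim V'"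
proof -
  have "\<Gamma> \<subseteq> Eucl"
    using assms(1) unfolding discrete_subgroup_E_def subgroup_E_def by blast
  note P = fi_cocompact_translation_pairD[OF assms(2)]
  note P' = fi_cocompact_translation_pairD[OF assms(3)]
  obtain x0 y0 where "x0 \<in> V" "y0 \<in> V'"
    using P(4) P'(4) by blast
  obtain B where "\<forall>x\<in>V. \<exists>y\<in>V'. dist x y \<le> B"
    using bounded_distance_to_invariant_set[OF P(6,2) \<open>\<Gamma> \<subseteq> Eucl\<close> P(5) P'(1,7,5) \<open>y0 \<in> V'\<close>] .
  moreover obtain B' where "\<forall>y\<in>V'. \<exists>x\<in>V. dist y x \<le> B'"
    using bounded_distance_to_invariant_set[OF P'(6,2) \<open>\<Gamma> \<subseteq> Eucl\<close> P'(5) P(1,7,5) \<open>x0 \<in> V\<close>] .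
  ultimately have V': "V' = (\<lambda>x. x + (y0 - x0)) ` V"
    using affine_translation_of_mutually_bounded_distance[OF P(3) P'(3) \<open>x0 \<in> V\<close> \<open>y0 \<in> V'\<close>]
    by blast
  have "aff_dim V' = aff_dim V"
    unfolding V' using aff_dim_translation_eq[of "y0 - x0" V] by (simp add: add.commute)
  with V' show ?thesis
    by auto
qed

end
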